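(* Let $E>0$, $T>0$, $r,q\ge 0$ be constants and let $\beta:\mathbb{R}\to\mathbb{R}$ be a (sufficiently smooth) function. Let $V(t,S)$, $t\in[0,T]$, $S>0$, be a given (sufficiently smooth) function. Introduce the variables $u=\ln(S/E)$ and $\tau=T-t$, and define $$Y(\tau,u):=\partial_t V+(r-q)S\partial_S V+ S\, \beta(S\partial_S^2 V)-rV,$$ $$H(\tau,u):=S\,\partial^2_S V(t,S),$$ where the right-hand sides are evaluated at $t=T-\tau$, $S=Ee^{u}$. Then $$-\partial_\tau H+\partial_u\beta(H)+\partial^2_u\beta(H)+(r-q)\partial_u H-qH=\frac{1}{E}e^{-u}\left[\partial_u^2 Y-\partial_u Y\right].$$
   Context: In the paper $\beta(H)=\frac12\hat\sigma(H)^2H$ for a nonlinear volatility function $\hat\sigma$, $r$ is the interest rate, $q$ the dividend yield, $E$ the strike price and $T$ the maturity; the identity holds for a general function $\beta$. *)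

theory Defs
  imports "HOL-Analysis.Analysis"
begin

definition pd_t :: "(real \<Rightarrow> real \<Rightarrow> real) \<Rightarrow> real \<Rightarrow> real \<Rightarrow> real" where
  "pd_t V t S = deriv (\<lambda>t'. V t' S) t"

definition pd_S :: "(real \<Rightarrow> real \<Rightarrow> real) \<Rightarrow> real \<Rightarrow> real \<Rightarrow> real" where
  "pd_S V t S = deriv (\<lambda>S'. V t S') S"

inductive_set partials :: "(real \<Rightarrow> real \<Rightarrow> real) \<Rightarrow> (real \<Rightarrow> real \<Rightarrow> real) set"
  for V where
    base: "V \<in> partials V"
  | dt: "g \<in> partials V \<Longrightarrow> pd_t g \<in> partials V"
  | dS: "g \<in> partials V \<Longrightarrow> pd_S g \<in> partials V"

text \<open>V is C-infinity on the (open) set U of the (t,S)-plane: every iterated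
  partial derivative is (Frechet) differentiable, hence continuous, on U.\<close>
definition smooth2_on :: "(real \<times> real) set \<Rightarrow> (real \<Rightarrow> real \<Rightarrow> real) \<Rightarrow> bool" where
  "smooth2_on U V \<longleftrightarrow> (\<forall>g \<in> partials V. (case_prod g) differentiable_on U)"

definition smooth1 :: "(real \<Rightarrow> real) \<Rightarrow> bool" where
  "smooth1 f \<longleftrightarrow> (\<forall>n x. (deriv ^^ n) f differentiable (at x))"

definition Yfun :: "real \<Rightarrow> real \<Rightarrow> real \<Rightarrow> real \<Rightarrow> (real \<Rightarrow> real) \<Rightarrow> (real \<Rightarrow> real \<Rightarrow> real)
    \<Rightarrow> real \<Rightarrow> real \<Rightarrow> real" where
  "Yfun E T r q \<beta> V \<tau> u =
     (let t = T - \<tau>; S = E * exp u in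
        pd_t V t S + (r - q) * S * pd_S V t S + S * \<beta> (S * pd_S (pd_S V) t S) - r * V t S)"

definition Hfun :: "real \<Rightarrow> real \<Rightarrow> (real \<Rightarrow> real \<Rightarrow> real) \<Rightarrow> real \<Rightarrow> real \<Rightarrow> real" where
  "Hfun E T V \<tau> u = (let t = T - \<tau>; S = E * exp u in S * pd_S (pd_S V) t S)"

end

theory Submission
  imports Defs
begin

text \<open>
  With \<open>S = E e\<^sup>u\<close> the Euler operator \<open>S \<partial>\<^sub>S\<close> becomes \<open>\<partial>\<^sub>u\<close>, so \<open>\<partial>\<^sub>u\<^sup>2 - \<partial>\<^sub>u\<close> acts on a
  function of \<open>S\<close> as \<open>S\<^sup>2 \<partial>\<^sub>S\<^sup>2\<close>, and on \<open>S g(u)\<close> as \<open>S (\<partial>\<^sub>u g + \<partial>\<^sub>u\<^sup>2 g)\<close>.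
  Applying this to the two parts of \<open>Y\<close> and dividing by \<open>S\<close> produces
  \<open>\<partial>\<^sub>u \<beta>(H) + \<partial>\<^sub>u\<^sup>2 \<beta>(H)\<close> together with \<open>S \<partial>\<^sub>S\<^sup>2\<close> applied to \<open>\<partial>\<^sub>t V + (r - q) S \<partial>\<^sub>S V - r V\<close>.
  Since \<open>\<partial>\<^sub>\<tau> = -\<partial>\<^sub>t\<close>, the remaining terms match the left-hand side once the third
  order mixed partials \<open>\<partial>\<^sub>S\<^sup>2 \<partial>\<^sub>t V\<close> and \<open>\<partial>\<^sub>t \<partial>\<^sub>S\<^sup>2 V\<close> are identified (Schwarz's theorem).
\<close>

lemma has_real_derivative_pd_S:
  assumes "open U" "(t, S) \<in> U" "case_prod g differentiable_on U"
  shows "((\<lambda>S'. g t S') has_real_derivative pd_S g t S) (at S)"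
proof -
  have "case_prod g differentiable (at (t, S))"
    using assms differentiable_on_eq_differentiable_at by blast
  moreover have "(\<lambda>S'. (t, S')) differentiable (at S)"
    by (auto intro!: derivative_intros simp: differentiable_def)
  ultimately have "(case_prod g \<circ> (\<lambda>S'. (t, S'))) differentiable (at S)"
    using differentiable_chain_at by fastforce
  then show ?thesis
    unfolding pd_S_def by (simp add: o_def DERIV_deriv_iff_real_differentiable)
qed

lemma has_real_derivative_pd_t:
  assumes "open U" "(t, S) \<in> U" "case_prod g differentiable_on U"
  shows "((\<lambda>t'. g t' S) has_real_derivative pd_t g t S) (at t)"
proof -
  have "case_prod g differentiable (at (t, S))"
    using assms differentiable_on_eq_differentiable_at by blast
  moreover have "(\<lambda>t'. (t', S)) differentiable (at t)"
    by (auto intro!: derivative_intros simp: differentiable_def)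
  ultimately have "(case_prod g \<circ> (\<lambda>t'. (t', S))) differentiable (at t)"
    using differentiable_chain_at by fastforce
  then show ?thesis
    unfolding pd_t_def by (simp add: o_def DERIV_deriv_iff_real_differentiable)
qed

lemma pd_S_cong_on:
  assumes "open U" "(t, S) \<in> U" "\<And>t S. (t, S) \<in> U \<Longrightarrow> g t S = h t S"
  shows "pd_S g t S = pd_S h t S"
proof -
  have "open (Pair t -` U)"
    by (rule continuous_open_vimage[OF assms(1)]) (intro continuous_intros)
  then have "eventually (\<lambda>S'. g t S' = h t S') (nhds S)"
    unfolding eventually_nhds using assms(2,3) by (intro exI[of _ "Pair t -` U"]) auto
  then show ?thesis
    unfolding pd_S_def by (rule deriv_cong_ev) simp
qed

subsection \<open>Symmetry of mixed partial derivatives\<close>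

text \<open>Differentiate \<open>f t S - f t a = \<integral>\<^sub>a\<^sup>S \<partial>\<^sub>S f t\<close> in \<open>t\<close> under the integral sign.\<close>

lemma pd_t_eq_integral_pd_t_pd_S:
  assumes "open U" "open A" "convex A" "t0 \<in> A" "a \<le> S" "A \<times> {a..S} \<subseteq> U"
    and f: "case_prod f differentiable_on U"
    and fS: "case_prod (pd_S f) differentiable_on U"
    and fSt: "continuous_on U (case_prod (pd_t (pd_S f)))"
  shows "pd_t f t0 S = pd_t f t0 a + integral {a..S} (pd_t (pd_S f) t0)"
proof -
  have ftc: "(pd_S f t has_integral (f t S - f t a)) {a..S}" if "t \<in> A" for t
  proof (rule fundamental_theorem_of_calculus)
    fix x assume "x \<in> {a..S}"
    with \<open>t \<in> A\<close> assms(6) have "(t, x) \<in> U" by auto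
    from has_real_derivative_pd_S[OF assms(1) this f]
    show "((\<lambda>S'. f t S') has_vector_derivative pd_S f t x) (at x within {a..S})"
      using has_real_derivative_iff_has_vector_derivative has_field_derivative_at_within by blast
  qed fact
  have "((\<lambda>t. integral (cbox a S) (pd_S f t)) has_field_derivative
          integral (cbox a S) (pd_t (pd_S f) t0)) (at t0 within A)"
  proof (rule leibniz_rule_field_derivative[where fx = "pd_t (pd_S f)"])
    fix x s assume "x \<in> A" "s \<in> cbox a S"
    with assms(6) have "(x, s) \<in> U" by auto
    from has_real_derivative_pd_t[OF assms(1) this fS]
    show "((\<lambda>x. pd_S f x s) has_field_derivative pd_t (pd_S f) x s) (at x within A)"
      using has_field_derivative_at_within by blast
  next
    fix x assume "x \<in> A"
    have "Pair x ` {a..S} \<subseteq> U"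
      using assms(6) \<open>x \<in> A\<close> by auto
    then have "continuous_on {a..S} (pd_S f x)"
      using continuous_on_compose2[OF differentiable_imp_continuous_on[OF fS]
          continuous_on_Pair[OF continuous_on_const continuous_on_id]] by simp
    then show "pd_S f x integrable_on cbox a S"
      by (simp add: integrable_continuous_real)
  next
    show "continuous_on (A \<times> cbox a S) (\<lambda>(x, s). pd_t (pd_S f) x s)"
      using continuous_on_subset[OF fSt assms(6)] by simp
  qed (use assms(3,4) in auto)
  then have "((\<lambda>t. integral {a..S} (pd_S f t)) has_field_derivative
               integral {a..S} (pd_t (pd_S f) t0)) (at t0)"
    using at_within_open[OF assms(4,2)] by simp
  then have "((\<lambda>t. f t S - f t a) has_field_derivative integral {a..S} (pd_t (pd_S f) t0)) (at t0)"
    by (rule has_field_derivative_transform_within_open[OF _ assms(2,4)])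
       (simp add: ftc integral_unique)
  moreover have "((\<lambda>t. f t S - f t a) has_field_derivative pd_t f t0 S - pd_t f t0 a) (at t0)"
    using assms(4-6) by (intro DERIV_diff has_real_derivative_pd_t[OF assms(1) _ f]) auto
  ultimately have "integral {a..S} (pd_t (pd_S f) t0) = pd_t f t0 S - pd_t f t0 a"
    by (rule DERIV_unique)
  then show ?thesis
    by simp
qed

lemma pd_S_pd_t_eq_pd_t_pd_S:
  assumes "open U" "(t0, S0) \<in> U"
    and f: "case_prod f differentiable_on U"
    and fS: "case_prod (pd_S f) differentiable_on U"
    and fSt: "continuous_on U (case_prod (pd_t (pd_S f)))"
  shows "pd_S (pd_t f) t0 S0 = pd_t (pd_S f) t0 S0"
proof -
  obtain A' B where AB: "open A'" "open B" "(t0, S0) \<in> A' \<times> B" "A' \<times> B \<subseteq> U"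
    by (rule open_prod_elim[OF assms(1,2)])
  then have "t0 \<in> A'" "S0 \<in> B"
    by auto
  obtain d where "d > 0" "ball t0 d \<subseteq> A'"
    by (rule openE[OF AB(1) \<open>t0 \<in> A'\<close>])
  define A where "A = ball t0 d"
  obtain e where "e > 0" "ball S0 e \<subseteq> B"
    by (rule openE[OF AB(2) \<open>S0 \<in> B\<close>])
  define a where "a = S0 - e/2"
  define b where "b = S0 + e/2"
  have "{a..b} \<subseteq> B"
    using \<open>e > 0\<close> by (intro order_trans[OF _ \<open>ball S0 e \<subseteq> B\<close>]) (auto simp: a_def b_def dist_real_def)
  with \<open>ball t0 d \<subseteq> A'\<close> have "A \<times> {a..b} \<subseteq> A' \<times> B"
    unfolding A_def by auto
  then have box: "A \<times> {a..b} \<subseteq> U"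
    using AB(4) by (rule order_trans)
  have A: "open A" "convex A" "t0 \<in> A"
    using \<open>d > 0\<close> by (auto simp: A_def)
  have S0: "S0 \<in> {a<..<b}"
    using \<open>e > 0\<close> by (simp add: a_def b_def)
  have integral_eq: "pd_t f t0 S = pd_t f t0 a + integral {a..S} (pd_t (pd_S f) t0)"
    if "S \<in> {a<..<b}" for S
    using that box
    by (intro pd_t_eq_integral_pd_t_pd_S[OF assms(1) A _ _ f fS fSt]) auto
  have "Pair t0 ` {a..b} \<subseteq> U"
    using box A(3) by auto
  then have "continuous_on {a..b} (pd_t (pd_S f) t0)"
    using continuous_on_compose2[OF fSt continuous_on_Pair[OF continuous_on_const continuous_on_id]]
    by simp
  then have "((\<lambda>S. integral {a..S} (pd_t (pd_S f) t0)) has_field_derivative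
               pd_t (pd_S f) t0 S0) (at S0 within {a..b})"
    by (rule integral_has_real_derivative) (use S0 in auto)
  moreover have "at S0 within {a..b} = at S0"
    using S0 by (intro at_within_interior) simp
  ultimately have "((\<lambda>S. integral {a..S} (pd_t (pd_S f) t0)) has_field_derivative
               pd_t (pd_S f) t0 S0) (at S0)"
    by simp
  from DERIV_add[OF DERIV_const this]
  have "((\<lambda>S. pd_t f t0 a + integral {a..S} (pd_t (pd_S f) t0)) has_field_derivative
          pd_t (pd_S f) t0 S0) (at S0)"
    by simp
  then have "((\<lambda>S. pd_t f t0 S) has_field_derivative pd_t (pd_S f) t0 S0) (at S0)"
    by (rule has_field_derivative_transform_within_open[where S = "{a<..<b}"])
       (use S0 integral_eq in auto)
  then show ?thesis
    unfolding pd_S_def[of "pd_t f"] by (rule DERIV_imp_deriv)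
qed

lemma partials_pd_S_subset: "partials (pd_S V) \<subseteq> partials V"
proof
  fix g assume "g \<in> partials (pd_S V)"
  then show "g \<in> partials V"
    by induction (auto intro: partials.intros)
qed

lemma smooth2_on_differentiable_on:
  "smooth2_on U V \<Longrightarrow> g \<in> partials V \<Longrightarrow> case_prod g differentiable_on U"
  unfolding smooth2_on_def by blast

lemma smooth2_on_pd_S: "smooth2_on U V \<Longrightarrow> smooth2_on U (pd_S V)"
  using partials_pd_S_subset unfolding smooth2_on_def by blast

lemma smooth2_on_pd_S_pd_t:
  assumes "open U" "smooth2_on U f" "(t, S) \<in> U"
  shows "pd_S (pd_t f) t S = pd_t (pd_S f) t S"
  using assms
  by (intro pd_S_pd_t_eq_pd_t_pd_S differentiable_imp_continuous_on
        smooth2_on_differentiable_on) (auto intro: partials.intros)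

lemma smooth2_on_pd_S_pd_S_pd_t:
  assumes "open U" "smooth2_on U V" "(t, S) \<in> U"
  shows "pd_S (pd_S (pd_t V)) t S = pd_t (pd_S (pd_S V)) t S"
proof -
  have "pd_S (pd_S (pd_t V)) t S = pd_S (pd_t (pd_S V)) t S"
    using assms smooth2_on_pd_S_pd_t[OF assms(1,2)] by (intro pd_S_cong_on) auto
  also have "\<dots> = pd_t (pd_S (pd_S V)) t S"
    using assms by (intro smooth2_on_pd_S_pd_t smooth2_on_pd_S)
  finally show ?thesis .
qed

lemma smooth1_deriv: "smooth1 f \<Longrightarrow> smooth1 (deriv f)"
  unfolding smooth1_def by (metis funpow_Suc_right o_apply)

lemma smooth1_has_real_derivative: "smooth1 f \<Longrightarrow> (f has_real_derivative deriv f x) (at x)"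
  unfolding smooth1_def by (metis DERIV_deriv_iff_real_differentiable funpow_0)

subsection \<open>Derivatives in the log-price variable\<close>

context
  fixes E T \<tau> :: real and V :: "real \<Rightarrow> real \<Rightarrow> real" and U :: "(real \<times> real) set"
  assumes open_U: "open U" and smooth_V: "smooth2_on U V"
    and line_in_U: "\<And>x. (T - \<tau>, E * exp x) \<in> U"
begin

lemma partial_exp_has_real_derivative:
  assumes "g \<in> partials V"
  shows "((\<lambda>x. g (T - \<tau>) (E * exp x)) has_real_derivative
           E * exp x * pd_S g (T - \<tau>) (E * exp x)) (at x)"
  using DERIV_chain2[OF has_real_derivative_pd_S[OF open_U line_in_U
          smooth2_on_differentiable_on[OF smooth_V assms]] DERIV_cmult[OF DERIV_exp]]
  by (simp add: mult.commute)

lemma Hfun_has_real_derivative: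
  "((\<lambda>x. Hfun E T V \<tau> x) has_real_derivative
     E * exp x * (pd_S (pd_S V) (T - \<tau>) (E * exp x)
       + E * exp x * pd_S (pd_S (pd_S V)) (T - \<tau>) (E * exp x))) (at x)"
  unfolding Hfun_def Let_def
  by (rule derivative_eq_intros partial_exp_has_real_derivative partials.intros refl)+
     (simp add: algebra_simps)

lemma deriv_Hfun:
  "deriv (\<lambda>x. Hfun E T V \<tau> x) u =
     E * exp u * (pd_S (pd_S V) (T - \<tau>) (E * exp u)
       + E * exp u * pd_S (pd_S (pd_S V)) (T - \<tau>) (E * exp u))"
  by (rule DERIV_imp_deriv[OF Hfun_has_real_derivative])

lemma deriv_Hfun_tau:
  "deriv (\<lambda>\<sigma>. Hfun E T V \<sigma> u) \<tau> = - E * exp u * pd_t (pd_S (pd_S V)) (T - \<tau>) (E * exp u)"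
proof -
  have "((\<lambda>t. pd_S (pd_S V) t (E * exp u)) has_real_derivative
          pd_t (pd_S (pd_S V)) (T - \<tau>) (E * exp u)) (at (T - \<tau>))"
    using smooth_V partials.intros
    by (intro has_real_derivative_pd_t[OF open_U line_in_U] smooth2_on_differentiable_on) blast+
  moreover have "((\<lambda>\<sigma>. T - \<sigma>) has_real_derivative - 1) (at \<tau>)"
    by (auto intro!: derivative_eq_intros)
  ultimately have "((\<lambda>\<sigma>. pd_S (pd_S V) (T - \<sigma>) (E * exp u)) has_real_derivative
          pd_t (pd_S (pd_S V)) (T - \<tau>) (E * exp u) * - 1) (at \<tau>)"
    by (rule DERIV_chain2)
  then have "((\<lambda>\<sigma>. Hfun E T V \<sigma> u) has_real_derivative
               - E * exp u * pd_t (pd_S (pd_S V)) (T - \<tau>) (E * exp u)) (at \<tau>)"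
    unfolding Hfun_def Let_def using DERIV_cmult by fastforce
  then show ?thesis
    by (rule DERIV_imp_deriv)
qed

context
  fixes \<beta> :: "real \<Rightarrow> real"
  assumes smooth_\<beta>: "smooth1 \<beta>"
begin

lemma deriv_beta_Hfun_differentiable:
  "deriv (\<lambda>x. \<beta> (Hfun E T V \<tau> x)) differentiable (at u)"
proof -
  define H' where "H' x = E * exp x * (pd_S (pd_S V) (T - \<tau>) (E * exp x)
    + E * exp x * pd_S (pd_S (pd_S V)) (T - \<tau>) (E * exp x))" for x
  have dH: "(Hfun E T V \<tau> has_real_derivative H' x) (at x)" for x
    unfolding H'_def by (rule Hfun_has_real_derivative)
  have "deriv (\<lambda>x. \<beta> (Hfun E T V \<tau> x)) = (\<lambda>x. deriv \<beta> (Hfun E T V \<tau> x) * H' x)"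
    using DERIV_chain2[OF smooth1_has_real_derivative[OF smooth_\<beta>] dH]
    by (intro ext DERIV_imp_deriv) (simp add: mult.commute)
  moreover have "\<exists>D. (H' has_real_derivative D) (at u)"
    unfolding H'_def
    by (rule exI) (rule derivative_eq_intros partial_exp_has_real_derivative partials.intros refl)+
  then obtain D where "(H' has_real_derivative D) (at u)" ..
  with dH have "\<exists>D. ((\<lambda>x. deriv \<beta> (Hfun E T V \<tau> x) * H' x) has_real_derivative D) (at u)"
    using DERIV_mult DERIV_chain2[OF smooth1_has_real_derivative[OF smooth1_deriv[OF smooth_\<beta>]]]
    by blast
  ultimately show ?thesis
    unfolding real_differentiable_def by simp
qed

lemma Yfun_second_minus_first_deriv:
  fixes u r q :: real
  defines "S \<equiv> E * exp u" and "t \<equiv> T - \<tau>" and "B \<equiv> \<lambda>x. \<beta> (Hfun E T V \<tau> x)"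
  shows "deriv (deriv (\<lambda>x. Yfun E T r q \<beta> V \<tau> x)) u - deriv (\<lambda>x. Yfun E T r q \<beta> V \<tau> x) u =
    S * (S * (pd_S (pd_S (pd_t V)) t S
              + (r - q) * (2 * pd_S (pd_S V) t S + S * pd_S (pd_S (pd_S V)) t S)
              - r * pd_S (pd_S V) t S)
         + deriv B u + deriv (deriv B) u)"
proof -
  define Y' where "Y' x = E * exp x * (pd_S (pd_t V) t (E * exp x)
    + (r - q) * (pd_S V t (E * exp x) + E * exp x * pd_S (pd_S V) t (E * exp x))
    - r * pd_S V t (E * exp x) + B x + deriv B x)" for x
  have dB: "(B has_real_derivative deriv B x) (at x)" for x
    unfolding B_def DERIV_deriv_iff_real_differentiable real_differentiable_def
    using DERIV_chain2[OF smooth1_has_real_derivative[OF smooth_\<beta>] Hfun_has_real_derivative]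
    by blast
  have ddB: "(deriv B has_real_derivative deriv (deriv B) u) (at u)"
    unfolding B_def DERIV_deriv_iff_real_differentiable
    by (rule deriv_beta_Hfun_differentiable)
  have "(\<lambda>x. Yfun E T r q \<beta> V \<tau> x) = (\<lambda>x. pd_t V t (E * exp x)
    + (r - q) * (E * exp x) * pd_S V t (E * exp x) + E * exp x * B x - r * V t (E * exp x))"
    by (simp add: Yfun_def Hfun_def B_def t_def Let_def)
  moreover have "((\<lambda>x. pd_t V t (E * exp x) + (r - q) * (E * exp x) * pd_S V t (E * exp x)
    + E * exp x * B x - r * V t (E * exp x)) has_real_derivative Y' x) (at x)" for x
    unfolding Y'_def t_def
    by (rule derivative_eq_intros dB partial_exp_has_real_derivative partials.intros refl)+
       (simp add: algebra_simps)
  ultimately have "((\<lambda>x. Yfun E T r q \<beta> V \<tau> x) has_real_derivative Y' x) (at x)" for x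
    by simp
  then have "deriv (\<lambda>x. Yfun E T r q \<beta> V \<tau> x) = Y'"
    by (intro ext DERIV_imp_deriv)
  moreover have "(Y' has_real_derivative Y' u + S * (S * (pd_S (pd_S (pd_t V)) t S
              + (r - q) * (2 * pd_S (pd_S V) t S + S * pd_S (pd_S (pd_S V)) t S)
              - r * pd_S (pd_S V) t S) + deriv B u + deriv (deriv B) u)) (at u)"
    unfolding Y'_def S_def t_def
    by (rule derivative_eq_intros dB ddB partial_exp_has_real_derivative partials.intros refl)+
       (simp add: algebra_simps)
  ultimately show ?thesis
    using DERIV_imp_deriv by fastforce
qed

end

end

theorem lemma2:
  fixes E T r q :: real and \<beta> :: "real \<Rightarrow> real" and V :: "real \<Rightarrow> real \<Rightarrow> real"
    and U :: "(real \<times> real) set"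
  assumes "E > 0" "T > 0" "r \<ge> 0" "q \<ge> 0"
    and "smooth1 \<beta>"
    and "open U" "{0..T} \<times> {0<..} \<subseteq> U" "smooth2_on U V"
    and "\<tau> \<in> {0..T}"
  shows "- deriv (\<lambda>s. Hfun E T V s u) \<tau>
           + deriv (\<lambda>x. \<beta> (Hfun E T V \<tau> x)) u
           + deriv (deriv (\<lambda>x. \<beta> (Hfun E T V \<tau> x))) u
           + (r - q) * deriv (\<lambda>x. Hfun E T V \<tau> x) u
           - q * Hfun E T V \<tau> u
         = (1 / E) * exp (- u) *
             (deriv (deriv (\<lambda>x. Yfun E T r q \<beta> V \<tau> x)) u - deriv (\<lambda>x. Yfun E T r q \<beta> V \<tau> x) u)"
proof -
  have line: "(T - \<tau>, E * exp x) \<in> U" for x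
    using assms(1,7,9) by auto
  have mixed: "pd_S (pd_S (pd_t V)) (T - \<tau>) (E * exp u) = pd_t (pd_S (pd_S V)) (T - \<tau>) (E * exp u)"
    using smooth2_on_pd_S_pd_S_pd_t[OF assms(6,8) line] .
  have cancel: "(1 / E) * exp (- u) * (E * exp u * X) = X" for X
    using assms(1) by (simp add: exp_minus)
  show ?thesis
    unfolding Yfun_second_minus_first_deriv[OF assms(6,8) line assms(5)] cancel
      deriv_Hfun_tau[OF assms(6,8) line] deriv_Hfun[OF assms(6,8) line] mixed
    by (simp add: Hfun_def algebra_simps)
qed

end
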